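(* Let $n\ge 1$ be odd. Consider the generalized $n$-gene repressilator system $$\dot r_i = a_i(p_{i-1}) - d_{r_i}(r_i),\qquad \dot p_i = k_i(r_i) - d_{p_i}(p_i),\qquad i=1,\dots,n,$$ (indices mod $n$), with functions satisfying the standing assumptions in the context, and let $E_C=(r_1^*,\dots,r_n^*,p_1^*,\dots,p_n^* )\in(0,\infty)^{2n}$ be its (central) steady state. If $\mathcal{D} > |\mathcal{K}|$, where $\mathcal{D}$ and $\mathcal{K}$ are evaluated at $E_C$, then $E_C$ is locally asymptotically stable.
   Context: Standing assumptions: each $a_i:[0,\infty)\to\mathbb{R}$ is $C^1$, nonnegative, strictly decreasing, with $a_i(0)>0$; each $d_{r_i}, d_{p_i}, k_i:[0,\infty)\to\mathbb{R}$ is $C^1$, vanishes at $0$, and is strictly increasing on $(0,\infty)$. At the steady state define $\partial_i^R := d_{r_i}'(r_i^* )$, $\partial_i^P := d_{p_i}'(p_i^* )$, $\mathcal{D}:=\prod_{i=1}^n \partial_i^R\partial_i^P$, $\mathcal{K}_i := k_i'(r_i^* )\,a_i'(p_{i-1}^* )$, and $\mathcal{K}:=\prod_{i=1}^n\mathcal{K}_i$. A steady state is called (locally asymptotically) stable if every eigenvalue of the Jacobian matrix at it has negative real part. *)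

theory Defs
  imports "HOL-Analysis.Analysis" "Jordan_Normal_Form.Char_Poly"
begin

text \<open>Genes are indexed 0,...,n-1 (cyclically); the predecessor of gene i is (i + n - 1) mod n.
  The state is x :: nat => real with x i = r_i and x (n + i) = p_i for i < n.\<close>

definition pred_idx :: "nat \<Rightarrow> nat \<Rightarrow> nat" where
  "pred_idx n i = (i + n - 1) mod n"

definition repr_field ::
  "nat \<Rightarrow> (nat \<Rightarrow> real \<Rightarrow> real) \<Rightarrow> (nat \<Rightarrow> real \<Rightarrow> real) \<Rightarrow> (nat \<Rightarrow> real \<Rightarrow> real)
   \<Rightarrow> (nat \<Rightarrow> real \<Rightarrow> real) \<Rightarrow> (nat \<Rightarrow> real) \<Rightarrow> nat \<Rightarrow> real" where
  "repr_field n a dr k dp x j =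
     (if j < n then a j (x (n + pred_idx n j)) - dr j (x j)
      else k (j - n) (x (j - n)) - dp (j - n) (x j))"

definition repr_jacobian ::
  "nat \<Rightarrow> (nat \<Rightarrow> real \<Rightarrow> real) \<Rightarrow> (nat \<Rightarrow> real \<Rightarrow> real) \<Rightarrow> (nat \<Rightarrow> real \<Rightarrow> real)
   \<Rightarrow> (nat \<Rightarrow> real \<Rightarrow> real) \<Rightarrow> (nat \<Rightarrow> real) \<Rightarrow> real mat" where
  "repr_jacobian n a dr k dp x =
     mat (2 * n) (2 * n)
       (\<lambda>(i, j). deriv (\<lambda>t. repr_field n a dr k dp (x(j := t)) i) (x j))"

text \<open>Locally asymptotically stable: every (complex) eigenvalue of the Jacobian has negative real part.\<close>
definition jac_stable :: "real mat \<Rightarrow> bool" where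
  "jac_stable J = (\<forall>z. eigenvalue (map_mat complex_of_real J) z \<longrightarrow> Re z < 0)"

end

theory Submission
  imports Defs
begin

text \<open>An eigenvector \<open>(r, p)\<close> of the Jacobian with eigenvalue \<open>z\<close> satisfies
  \<open>(z + \<partial>\<^sup>R\<^sub>i) r\<^sub>i = a\<^sub>i' p\<^sub>i\<^sub>-\<^sub>1\<close> and \<open>(z + \<partial>\<^sup>P\<^sub>i) p\<^sub>i = k\<^sub>i' r\<^sub>i\<close>.
  If \<open>Re z \<ge> 0\<close> then \<open>|z + c| \<ge> c\<close> for every \<open>c \<ge> 0\<close>, so multiplying the moduli of these
  relations once around the cycle gives \<open>\<D> \<Prod>|p\<^sub>i| \<le> |\<K>| \<Prod>|p\<^sub>i|\<close>. As \<open>\<D> > |\<K>|\<close>, some \<open>p\<^sub>i\<close>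
  vanishes, and the relations carry this zero around the cycle to the whole eigenvector.\<close>

lemma pred_idx_less: "i < n \<Longrightarrow> pred_idx n i < n"
  by (simp add: pred_idx_def)

lemma pred_idx_Suc_mod: "i < n \<Longrightarrow> pred_idx n (Suc i mod n) = i"
  by (cases "Suc i = n") (simp_all add: pred_idx_def)

lemma Suc_pred_idx_mod: "i < n \<Longrightarrow> Suc (pred_idx n i) mod n = i"
  by (cases i) (simp_all add: pred_idx_def)

lemma bij_betw_pred_idx: "bij_betw (pred_idx n) {..<n} {..<n}"
  by (rule bij_betw_byWitness[where f' = "\<lambda>i. Suc i mod n"])
     (auto simp: pred_idx_less pred_idx_Suc_mod Suc_pred_idx_mod)

lemma prod_pred_idx_reindex: "(\<Prod>i<n. f (pred_idx n i)) = (\<Prod>i<n. f i)"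
  using prod.reindex_bij_betw[OF bij_betw_pred_idx] .

lemma pred_idx_cycle_induct:
  assumes "i0 < n" "P i0" "\<And>i. i < n \<Longrightarrow> P (pred_idx n i) \<Longrightarrow> P i" "i < n"
  shows "P i"
proof -
  have "P ((i0 + m) mod n)" for m
  proof (induction m)
    case 0
    then show ?case using assms(1,2) by simp
  next
    case (Suc m)
    have "(i0 + m) mod n < n" using assms(1) by simp
    then have "P (Suc ((i0 + m) mod n) mod n)"
      using assms(3) Suc.IH by (simp add: pred_idx_Suc_mod)
    then show ?case by (simp add: mod_Suc_eq)
  qed
  from this[of "i + n - i0"] show ?thesis
    using assms(1,4) by simp
qed

lemma norm_add_of_real_ge:
  fixes z :: complex
  assumes "Re z \<ge> 0" "t \<ge> 0"
  shows "t \<le> cmod (z + of_real t)"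
  using assms complex_Re_le_cmod[of "z + of_real t"] by simp

lemma cyclic_cascade_only_trivial_solution:
  fixes z :: complex and \<alpha> \<beta> c d :: "nat \<Rightarrow> real" and r p :: "nat \<Rightarrow> complex"
  assumes "Re z \<ge> 0"
    and \<alpha>_nonneg: "\<And>i. i < n \<Longrightarrow> \<alpha> i \<ge> 0" and \<beta>_nonneg: "\<And>i. i < n \<Longrightarrow> \<beta> i \<ge> 0"
    and gain: "(\<Prod>i<n. \<alpha> i * \<beta> i) > \<bar>\<Prod>i<n. d i * c i\<bar>"
    and r_eq: "\<And>i. i < n \<Longrightarrow> (z + of_real (\<alpha> i)) * r i = of_real (c i) * p (pred_idx n i)"
    and p_eq: "\<And>i. i < n \<Longrightarrow> (z + of_real (\<beta> i)) * p i = of_real (d i) * r i"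
    and "i < n"
  shows "r i = 0 \<and> p i = 0"
proof -
  define \<gamma> where "\<gamma> i = cmod (z + of_real (\<alpha> i)) * cmod (z + of_real (\<beta> i))" for i
  have \<gamma>_ge: "\<alpha> i * \<beta> i \<le> \<gamma> i" if "i < n" for i
    unfolding \<gamma>_def using that \<alpha>_nonneg \<beta>_nonneg norm_add_of_real_ge[OF \<open>Re z \<ge> 0\<close>]
    by (intro mult_mono) auto
  have \<alpha>\<beta>_pos: "\<alpha> i > 0 \<and> \<beta> i > 0" if "i < n" for i
  proof (rule ccontr)
    assume "\<not> (\<alpha> i > 0 \<and> \<beta> i > 0)"
    then have "(\<Prod>i<n. \<alpha> i * \<beta> i) = 0"
      using that \<alpha>_nonneg[OF that] \<beta>_nonneg[OF that] by (intro prod_zero) auto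
    with gain show False by simp
  qed
  have \<gamma>_pos: "\<gamma> i > 0" if "i < n" for i
    using \<gamma>_ge[OF that] \<alpha>\<beta>_pos[OF that] by (meson less_le_trans mult_pos_pos)
  have cycle: "\<gamma> i * cmod (p i) = \<bar>d i * c i\<bar> * cmod (p (pred_idx n i))" if "i < n" for i
  proof -
    have "(z + of_real (\<alpha> i)) * ((z + of_real (\<beta> i)) * p i)
            = of_real (d i) * ((z + of_real (\<alpha> i)) * r i)"
      using p_eq[OF that] by (simp add: ac_simps)
    also have "\<dots> = of_real (d i * c i) * p (pred_idx n i)"
      using r_eq[OF that] by simp
    finally show ?thesis
      unfolding \<gamma>_def by (metis mult.assoc norm_mult norm_of_real)
  qed
  have "(\<Prod>i<n. \<gamma> i) * (\<Prod>i<n. cmod (p i)) = (\<Prod>i<n. \<bar>d i * c i\<bar> * cmod (p (pred_idx n i)))"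
    by (simp add: prod.distrib[symmetric] cycle)
  also have "\<dots> = \<bar>\<Prod>i<n. d i * c i\<bar> * (\<Prod>i<n. cmod (p i))"
    using prod_pred_idx_reindex[of "\<lambda>i. cmod (p i)" n]
    by (simp add: prod.distrib[of "\<lambda>i. \<bar>d i * c i\<bar>"] abs_prod)
  finally have "(\<Prod>i<n. \<gamma> i) * (\<Prod>i<n. cmod (p i)) = \<bar>\<Prod>i<n. d i * c i\<bar> * (\<Prod>i<n. cmod (p i))" .
  moreover have "(\<Prod>i<n. \<gamma> i) > \<bar>\<Prod>i<n. d i * c i\<bar>"
    using gain prod_mono[of "{..<n}" "\<lambda>i. \<alpha> i * \<beta> i" \<gamma>] \<gamma>_ge \<alpha>_nonneg \<beta>_nonneg
    by force
  ultimately have "(\<Prod>i<n. cmod (p i)) = 0" by simp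
  then obtain i0 where "i0 < n" "p i0 = 0" by auto
  have p_zero: "p j = 0" if "j < n" for j
  proof (rule pred_idx_cycle_induct[of i0 n])
    show "p i = 0" if "i < n" "p (pred_idx n i) = 0" for i
      using that cycle[of i] \<gamma>_pos[of i] by simp
  qed (use \<open>i0 < n\<close> \<open>p i0 = 0\<close> \<open>j < n\<close> in auto)
  have "z + of_real (\<alpha> i) \<noteq> 0"
    using norm_add_of_real_ge[OF \<open>Re z \<ge> 0\<close>, of "\<alpha> i"] \<alpha>\<beta>_pos[OF \<open>i < n\<close>] by auto
  then show ?thesis
    using r_eq[OF \<open>i < n\<close>] p_zero pred_idx_less \<open>i < n\<close> by simp
qed

lemma sum_of_real_delta_diff:
  fixes w :: "nat \<Rightarrow> 'a::real_algebra_1"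
  assumes "finite S" "j0 \<in> S" "j1 \<in> S"
  shows "(\<Sum>j\<in>S. of_real ((if j = j0 then A else 0) - (if j = j1 then R else 0)) * w j)
           = of_real A * w j0 - of_real R * w j1"
  using assms
  by (simp add: of_real_diff left_diff_distrib sum_subtractf if_distrib[of of_real]
      if_distrib[of "\<lambda>c. c * _"] cong: if_cong)

lemma has_real_derivative_fun_upd_component:
  assumes "(f has_real_derivative f') (at (x m))"
  shows "((\<lambda>t. f ((x(j := t)) m)) has_real_derivative (if j = m then f' else 0)) (at (x j))"
  using assms by (cases "j = m") simp_all

lemma repr_jacobian_upper_entry:
  assumes "i < n" "j < 2 * n"
    and "(a i has_real_derivative A) (at (x (n + pred_idx n i)))"
    and "(dr i has_real_derivative R) (at (x i))"
  shows "repr_jacobian n a dr k dp x $$ (i, j)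
           = (if j = n + pred_idx n i then A else 0) - (if j = i then R else 0)"
proof -
  have "repr_field n a dr k dp (x(j := t)) i
          = a i ((x(j := t)) (n + pred_idx n i)) - dr i ((x(j := t)) i)" for t
    using assms(1) by (simp add: repr_field_def)
  moreover have "((\<lambda>t. a i ((x(j := t)) (n + pred_idx n i)) - dr i ((x(j := t)) i))
      has_real_derivative (if j = n + pred_idx n i then A else 0) - (if j = i then R else 0)) (at (x j))"
    using assms(3,4) by (intro DERIV_diff has_real_derivative_fun_upd_component)
  ultimately show ?thesis
    using assms(1,2) by (simp add: repr_jacobian_def DERIV_imp_deriv)
qed

lemma repr_jacobian_lower_entry:
  assumes "i < n" "j < 2 * n"
    and "(k i has_real_derivative K) (at (x i))"
    and "(dp i has_real_derivative P) (at (x (n + i)))"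
  shows "repr_jacobian n a dr k dp x $$ (n + i, j)
           = (if j = i then K else 0) - (if j = n + i then P else 0)"
proof -
  have "repr_field n a dr k dp (x(j := t)) (n + i) = k i ((x(j := t)) i) - dp i ((x(j := t)) (n + i))" for t
    using assms(1) by (simp add: repr_field_def)
  moreover have "((\<lambda>t. k i ((x(j := t)) i) - dp i ((x(j := t)) (n + i)))
      has_real_derivative (if j = i then K else 0) - (if j = n + i then P else 0)) (at (x j))"
    using assms(3,4) by (intro DERIV_diff has_real_derivative_fun_upd_component)
  ultimately show ?thesis
    using assms(1,2) by (simp add: repr_jacobian_def DERIV_imp_deriv)
qed

lemma dim_repr_jacobian [simp]:
  "dim_row (repr_jacobian n a dr k dp x) = 2 * n"
  "dim_col (repr_jacobian n a dr k dp x) = 2 * n"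
  by (simp_all add: repr_jacobian_def)

lemma repr_jacobian_mult_vec_upper:
  fixes v :: "complex vec"
  assumes "i < n" "dim_vec v = 2 * n"
    and "(a i has_real_derivative A) (at (x (n + pred_idx n i)))"
    and "(dr i has_real_derivative R) (at (x i))"
  shows "(map_mat of_real (repr_jacobian n a dr k dp x) *\<^sub>v v) $ i
           = of_real A * v $ (n + pred_idx n i) - of_real R * v $ i"
proof -
  have "(map_mat of_real (repr_jacobian n a dr k dp x) *\<^sub>v v) $ i
      = (\<Sum>j\<in>{0..<2 * n}. of_real ((if j = n + pred_idx n i then A else 0)
                                     - (if j = i then R else 0)) * v $ j)"
    using assms by (auto simp: scalar_prod_def repr_jacobian_upper_entry intro!: sum.cong)
  also have "\<dots> = of_real A * v $ (n + pred_idx n i) - of_real R * v $ i"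
    using assms(1) by (intro sum_of_real_delta_diff) (auto simp: pred_idx_less)
  finally show ?thesis .
qed

lemma repr_jacobian_mult_vec_lower:
  fixes v :: "complex vec"
  assumes "i < n" "dim_vec v = 2 * n"
    and "(k i has_real_derivative K) (at (x i))"
    and "(dp i has_real_derivative P) (at (x (n + i)))"
  shows "(map_mat of_real (repr_jacobian n a dr k dp x) *\<^sub>v v) $ (n + i)
           = of_real K * v $ i - of_real P * v $ (n + i)"
proof -
  have "(map_mat of_real (repr_jacobian n a dr k dp x) *\<^sub>v v) $ (n + i)
      = (\<Sum>j\<in>{0..<2 * n}. of_real ((if j = i then K else 0)
                                     - (if j = n + i then P else 0)) * v $ j)"
    using assms by (auto simp: scalar_prod_def repr_jacobian_lower_entry intro!: sum.cong)
  also have "\<dots> = of_real K * v $ i - of_real P * v $ (n + i)"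
    using assms(1) by (intro sum_of_real_delta_diff) auto
  finally show ?thesis .
qed

lemma jac_stable_repr_jacobianI:
  fixes \<alpha> \<beta> c d :: "nat \<Rightarrow> real"
  assumes a_at: "\<And>i. i < n \<Longrightarrow> (a i has_real_derivative c i) (at (x (n + pred_idx n i)))"
    and dr_at: "\<And>i. i < n \<Longrightarrow> (dr i has_real_derivative \<alpha> i) (at (x i))"
    and k_at: "\<And>i. i < n \<Longrightarrow> (k i has_real_derivative d i) (at (x i))"
    and dp_at: "\<And>i. i < n \<Longrightarrow> (dp i has_real_derivative \<beta> i) (at (x (n + i)))"
    and \<alpha>_nonneg: "\<And>i. i < n \<Longrightarrow> \<alpha> i \<ge> 0" and \<beta>_nonneg: "\<And>i. i < n \<Longrightarrow> \<beta> i \<ge> 0"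
    and gain: "(\<Prod>i<n. \<alpha> i * \<beta> i) > \<bar>\<Prod>i<n. d i * c i\<bar>"
  shows "jac_stable (repr_jacobian n a dr k dp x)"
  unfolding jac_stable_def
proof (intro allI impI)
  let ?J = "map_mat complex_of_real (repr_jacobian n a dr k dp x)"
  fix z
  assume "eigenvalue ?J z"
  then obtain v where v: "v \<in> carrier_vec (2 * n)" "v \<noteq> 0\<^sub>v (2 * n)" "?J *\<^sub>v v = z \<cdot>\<^sub>v v"
    unfolding eigenvalue_def eigenvector_def by auto
  have dim_v: "dim_vec v = 2 * n"
    using v(1) by simp
  have r_eq: "(z + of_real (\<alpha> i)) * v $ i = of_real (c i) * v $ (n + pred_idx n i)" if "i < n" for i
  proof -
    have "z * v $ i = (?J *\<^sub>v v) $ i"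
      using dim_v v(3) that by simp
    also have "\<dots> = of_real (c i) * v $ (n + pred_idx n i) - of_real (\<alpha> i) * v $ i"
      using that by (intro repr_jacobian_mult_vec_upper dim_v a_at dr_at)
    finally show ?thesis
      by (simp add: distrib_right)
  qed
  have p_eq: "(z + of_real (\<beta> i)) * v $ (n + i) = of_real (d i) * v $ i" if "i < n" for i
  proof -
    have "z * v $ (n + i) = (?J *\<^sub>v v) $ (n + i)"
      using dim_v v(3) that by simp
    also have "\<dots> = of_real (d i) * v $ i - of_real (\<beta> i) * v $ (n + i)"
      using that by (intro repr_jacobian_mult_vec_lower dim_v k_at dp_at)
    finally show ?thesis
      by (simp add: distrib_right)
  qed
  show "Re z < 0"
  proof (rule ccontr)
    assume "\<not> Re z < 0"
    then have halves_zero: "v $ i = 0 \<and> v $ (n + i) = 0" if "i < n" for i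
      using \<alpha>_nonneg \<beta>_nonneg gain r_eq p_eq that
      by (intro cyclic_cascade_only_trivial_solution[where r = "\<lambda>i. v $ i" and p = "\<lambda>i. v $ (n + i)"])
        auto
    have "v = 0\<^sub>v (2 * n)"
    proof (rule eq_vecI)
      fix j
      assume "j < dim_vec (0\<^sub>v (2 * n) :: complex vec)"
      then show "v $ j = 0\<^sub>v (2 * n) $ j"
        using halves_zero[of j] halves_zero[of "j - n"] by (cases "j < n") auto
    qed (simp add: dim_v)
    with v(2) show False ..
  qed
qed

lemma strict_mono_on_imp_deriv_nonneg:
  fixes f :: "real \<Rightarrow> real"
  assumes "strict_mono_on S f" "open S" "s \<in> S" "(f has_real_derivative f') (at s)"
  shows "0 \<le> f'"
proof (rule ccontr)
  assume "\<not> 0 \<le> f'"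
  then obtain d where "d > 0" and decr: "\<And>h. 0 < h \<Longrightarrow> h < d \<Longrightarrow> f (s + h) < f s"
    using DERIV_neg_dec_right[OF assms(4)] by force
  obtain e where "e > 0" and ball: "ball s e \<subseteq> S"
    using assms(2,3) openE by blast
  define h where "h = min d e / 2"
  have "0 < h" "h < d" "s + h \<in> S"
    using \<open>d > 0\<close> \<open>e > 0\<close> ball by (auto simp: h_def dist_real_def)
  then have "f s < f (s + h)"
    using assms(1,3) by (simp add: strict_mono_on_def)
  with decr[OF \<open>0 < h\<close> \<open>h < d\<close>] show False by simp
qed

theorem proposition5:
  fixes n :: nat
    and a a' dr dr' k k' dp dp' :: "nat \<Rightarrow> real \<Rightarrow> real"
    and x :: "nat \<Rightarrow> real"
  assumes n_odd: "odd n"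
    \<comment> \<open>a_i: C^1 on [0,oo), nonnegative, strictly decreasing, a_i(0) > 0\<close>
    and a_deriv: "\<And>i s. i < n \<Longrightarrow> s \<ge> 0 \<Longrightarrow> (a i has_real_derivative a' i s) (at s within {0..})"
    and a'_cont: "\<And>i. i < n \<Longrightarrow> continuous_on {0..} (a' i)"
    and a_nonneg: "\<And>i s. i < n \<Longrightarrow> s \<ge> 0 \<Longrightarrow> a i s \<ge> 0"
    and a_decr: "\<And>i s t. i < n \<Longrightarrow> 0 \<le> s \<Longrightarrow> s < t \<Longrightarrow> a i t < a i s"
    and a_zero: "\<And>i. i < n \<Longrightarrow> a i 0 > 0"
    \<comment> \<open>d_r_i, d_p_i, k_i: C^1 on [0,oo), vanish at 0, strictly increasing on (0,oo)\<close>
    and dr_deriv: "\<And>i s. i < n \<Longrightarrow> s \<ge> 0 \<Longrightarrow> (dr i has_real_derivative dr' i s) (at s within {0..})"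
    and dr'_cont: "\<And>i. i < n \<Longrightarrow> continuous_on {0..} (dr' i)"
    and dr_zero: "\<And>i. i < n \<Longrightarrow> dr i 0 = 0"
    and dr_incr: "\<And>i s t. i < n \<Longrightarrow> 0 < s \<Longrightarrow> s < t \<Longrightarrow> dr i s < dr i t"
    and dp_deriv: "\<And>i s. i < n \<Longrightarrow> s \<ge> 0 \<Longrightarrow> (dp i has_real_derivative dp' i s) (at s within {0..})"
    and dp'_cont: "\<And>i. i < n \<Longrightarrow> continuous_on {0..} (dp' i)"
    and dp_zero: "\<And>i. i < n \<Longrightarrow> dp i 0 = 0"
    and dp_incr: "\<And>i s t. i < n \<Longrightarrow> 0 < s \<Longrightarrow> s < t \<Longrightarrow> dp i s < dp i t"
    and k_deriv: "\<And>i s. i < n \<Longrightarrow> s \<ge> 0 \<Longrightarrow> (k i has_real_derivative k' i s) (at s within {0..})"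
    and k'_cont: "\<And>i. i < n \<Longrightarrow> continuous_on {0..} (k' i)"
    and k_zero: "\<And>i. i < n \<Longrightarrow> k i 0 = 0"
    and k_incr: "\<And>i s t. i < n \<Longrightarrow> 0 < s \<Longrightarrow> s < t \<Longrightarrow> k i s < k i t"
    \<comment> \<open>x is a steady state in (0,oo)^(2n): x i = r_i*, x (n+i) = p_i*\<close>
    and x_pos: "\<And>j. j < 2 * n \<Longrightarrow> x j > 0"
    and steady: "\<And>j. j < 2 * n \<Longrightarrow> repr_field n a dr k dp x j = 0"
    \<comment> \<open>D > |K|\<close>
    and DK: "(\<Prod>i<n. dr' i (x i) * dp' i (x (n + i)))
               > \<bar>\<Prod>i<n. k' i (x i) * a' i (x (n + pred_idx n i))\<bar>"
  shows "jac_stable (repr_jacobian n a dr k dp x)"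
proof -
  have at_interior: "(f has_real_derivative f' s) (at s)"
    if "\<And>s. s \<ge> 0 \<Longrightarrow> (f has_real_derivative f' s) (at s within {0..})" "s > 0"
    for f f' :: "real \<Rightarrow> real" and s
    using that(1)[of s] that(2) at_within_interior[of s "{0..}"] by simp
  have dr_at: "(dr i has_real_derivative dr' i (x i)) (at (x i))"
    and dp_at: "(dp i has_real_derivative dp' i (x (n + i))) (at (x (n + i)))" if "i < n" for i
    using that x_pos by (auto intro!: at_interior dr_deriv dp_deriv)
  have "strict_mono_on {0<..} (dr i)" "strict_mono_on {0<..} (dp i)" if "i < n" for i
    using dr_incr dp_incr that by (auto intro!: strict_mono_onI)
  then have "dr' i (x i) \<ge> 0" "dp' i (x (n + i)) \<ge> 0" if "i < n" for i
    using that x_pos[of i] x_pos[of "n + i"] dr_at[OF that] dp_at[OF that]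
    by (auto intro: strict_mono_on_imp_deriv_nonneg[OF _ open_greaterThan])
  moreover have "(a i has_real_derivative a' i (x (n + pred_idx n i))) (at (x (n + pred_idx n i)))"
    and "(k i has_real_derivative k' i (x i)) (at (x i))" if "i < n" for i
    using that x_pos pred_idx_less[OF that] by (auto intro!: at_interior a_deriv k_deriv)
  ultimately show ?thesis
    using dr_at dp_at DK by (intro jac_stable_repr_jacobianI) auto
qed

end
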